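(* Let $\mathbf A\in\mathbb C^{m\times n}$, $\mathbf B\in\mathbb C^{s\times n}$, let $\mathbf X_{LS}=(x_{ij})\in\mathbb C^{s\times m}$ be the minimum norm least squares solution of $\mathbf X\mathbf A=\mathbf B$, and let $\check{\mathbf B}=\mathbf B\mathbf A^{*}$ with $i$-th row $\check{\mathbf b}_{i.}$. (i) If $\operatorname{rank}\mathbf A=r\le n<m$, then for all $i=1,\dots,s$, $j=1,\dots,m$, \[x_{ij}=\frac{\sum_{\alpha\in I_{r,m}\{j\}}\left|\left((\mathbf A\mathbf A^{*})_{j.}(\check{\mathbf b}_{i.})\right)^{\alpha}_{\alpha}\right|}{\sum_{\alpha\in I_{r,m}}\left|(\mathbf A\mathbf A^{*})^{\alpha}_{\alpha}\right|}.\] (ii) If $\operatorname{rank}\mathbf A=m$, then for all $i=1,\dots,s$, $j=1,\dots,m$, $x_{ij}=\dfrac{\det\left((\mathbf A\mathbf A^{*})_{j.}(\check{\mathbf b}_{i.})\right)}{\det(\mathbf A\mathbf A^{*})}$.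
   Context: $\mathbf X_{LS}$ is the matrix of minimal Frobenius norm among all $\mathbf X\in\mathbb C^{s\times m}$ minimizing the Frobenius norm $\|\mathbf X\mathbf A-\mathbf B\|$. $\mathbf M_{j.}(\mathbf c)$ denotes $\mathbf M$ with its $j$-th row replaced by the row vector $\mathbf c$. $I_{r,m}$ is the set of strictly increasing sequences of $r$ elements of $\{1,\dots,m\}$, $I_{r,m}\{j\}=\{\alpha\in I_{r,m}:j\in\alpha\}$, $\mathbf M^{\alpha}_{\alpha}$ is the principal submatrix indexed by $\alpha$, $|\cdot|$ is the determinant. *)

theory Defs
  imports "Jordan_Normal_Form.Schur_Decomposition" "Jordan_Normal_Form.DL_Rank"
          "Jordan_Normal_Form.DL_Submatrix"
begin

definition frob_norm :: "complex mat \<Rightarrow> real" where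
  "frob_norm M = sqrt (\<Sum>i<dim_row M. \<Sum>k<dim_col M. (cmod (M $$ (i,k)))^2)"

definition is_ls_solution :: "complex mat \<Rightarrow> complex mat \<Rightarrow> complex mat \<Rightarrow> bool" where
  "is_ls_solution A B X \<longleftrightarrow> X \<in> carrier_mat (dim_row B) (dim_row A) \<and>
     (\<forall>Y \<in> carrier_mat (dim_row B) (dim_row A). frob_norm (X * A - B) \<le> frob_norm (Y * A - B))"

definition is_min_norm_ls_solution :: "complex mat \<Rightarrow> complex mat \<Rightarrow> complex mat \<Rightarrow> bool" where
  "is_min_norm_ls_solution A B X \<longleftrightarrow> is_ls_solution A B X \<and>
     (\<forall>Y. is_ls_solution A B Y \<longrightarrow> frob_norm X \<le> frob_norm Y)"

definition replace_row :: "'a mat \<Rightarrow> nat \<Rightarrow> 'a vec \<Rightarrow> 'a mat" where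
  "replace_row M j c = mat (dim_row M) (dim_col M) (\<lambda>(i,k). if i = j then c $ k else M $$ (i,k))"

text \<open>I_{r,m}: r-element subsets of {0..<m} (strictly increasing index sequences).\<close>
definition index_sets :: "nat \<Rightarrow> nat \<Rightarrow> nat set set" where
  "index_sets r m = {\<alpha>. \<alpha> \<subseteq> {..<m} \<and> card \<alpha> = r}"

definition principal_submatrix :: "'a mat \<Rightarrow> nat set \<Rightarrow> 'a mat" where
  "principal_submatrix M \<alpha> = submatrix M \<alpha> \<alpha>"

end

theory Submission
  imports Defs "Jordan_Normal_Form.DL_Rank_Submatrix"
begin

(* Let H = A A^* and M(lambda) = H + lambda I. Every least squares solution satisfies X H = B A^*,
   and the minimum norm one has rows orthogonal to the kernel of A^*, which is the kernel of H.
   Expanding det of M(lambda) with row j replaced by the i-th row of B A^* = X H along that row gives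
   x_ij det M(lambda) - lambda * sum_k x_ik adj(M(lambda))_kj.
   The coefficient of lambda^t in det M(lambda) is the sum of the principal (m-t)-minors of H; by
   Cauchy-Binet this is the sum of the squared moduli of the (m-t)-minors of A, so it vanishes for
   t < m - r and is nonzero for t = m - r. From M adj M = det M I, the coefficient vectors of
   lambda^t, t < m - r, in the j-th column of adj M lie in the kernel of H, hence are orthogonal to
   the rows of X. Comparing the coefficients of lambda^(m-r) gives (i); when r = m the constant
   coefficients give (ii). *)

section \<open>Submatrices and index sets\<close>

lemma bij_betw_pick:
  assumes "finite S"
  shows "bij_betw (pick S) {..<card S} S"
proof (rule bij_betw_byWitness[where f' = "\<lambda>x. card {a\<in>S. a < x}"])
  show "\<forall>a\<in>{..<card S}. card {b\<in>S. b < pick S a} = a" using card_pick_le by auto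
  show "\<forall>x\<in>S. pick S (card {a\<in>S. a < x}) = x" using pick_card_in_set by auto
  show "pick S ` {..<card S} \<subseteq> S" using pick_in_set_le by auto
  have "card {a\<in>S. a < x} < card S" if "x \<in> S" for x
    using that assms by (intro psubset_card_mono) auto
  then show "(\<lambda>x. card {a\<in>S. a < x}) ` S \<subseteq> {..<card S}" by auto
qed

lemma submatrix_map_mat: "submatrix (map_mat f M) I J = map_mat f (submatrix M I J)"
proof (rule eq_matI)
  fix i j assume i: "i < dim_row (map_mat f (submatrix M I J))"
    and j: "j < dim_col (map_mat f (submatrix M I J))"
  then have "i < card {i. i < dim_row M \<and> i \<in> I}" "j < card {j. j < dim_col M \<and> j \<in> J}"
    by (simp_all add: dim_submatrix)
  then show "submatrix (map_mat f M) I J $$ (i, j) = map_mat f (submatrix M I J) $$ (i, j)"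
    using pick_le by (simp add: submatrix_def)
qed (auto simp: submatrix_def)

lemma submatrix_mult:
  assumes A: "A \<in> carrier_mat nr n" and B: "B \<in> carrier_mat n nc"
  shows "submatrix (A * B) I J = submatrix A I UNIV * submatrix B UNIV J"
proof -
  have AI: "submatrix A I UNIV \<in> carrier_mat (card {i. i < nr \<and> i \<in> I}) n"
    and BJ: "submatrix B UNIV J \<in> carrier_mat n (card {j. j < nc \<and> j \<in> J})"
    using A B by (auto simp: dim_submatrix)
  show ?thesis
  proof (rule eq_matI)
    fix i j assume "i < dim_row (submatrix A I UNIV * submatrix B UNIV J)"
      and "j < dim_col (submatrix A I UNIV * submatrix B UNIV J)"
    then have i: "i < card {i. i < nr \<and> i \<in> I}" and j: "j < card {j. j < nc \<and> j \<in> J}"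
      using AI BJ by simp_all
    have "submatrix (A * B) I J $$ (i, j) = (\<Sum>l<n. A $$ (pick I i, l) * B $$ (l, pick J j))"
      using A B i j pick_le[OF i] pick_le[OF j]
      by (simp add: submatrix_index dim_submatrix scalar_prod_def lessThan_atLeast0)
    also have "\<dots> = (submatrix A I UNIV * submatrix B UNIV J) $$ (i, j)"
      using A B AI BJ i j
      by (simp add: submatrix_index scalar_prod_def lessThan_atLeast0 pick_UNIV)
    finally show "submatrix (A * B) I J $$ (i, j) = (submatrix A I UNIV * submatrix B UNIV J) $$ (i, j)" .
  qed (use A B AI BJ in \<open>simp_all add: dim_submatrix\<close>)
qed

lemma submatrix_submatrix_UNIV: "submatrix (submatrix A I UNIV) UNIV J = submatrix A I J"
proof (rule eq_matI)
  fix i j assume "i < dim_row (submatrix A I J)" and "j < dim_col (submatrix A I J)"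
  then have i: "i < card {i. i < dim_row A \<and> i \<in> I}" and j: "j < card {j. j < dim_col A \<and> j \<in> J}"
    by (simp_all add: dim_submatrix)
  then show "submatrix (submatrix A I UNIV) UNIV J $$ (i, j) = submatrix A I J $$ (i, j)"
    using pick_le[OF j] by (simp add: submatrix_index dim_submatrix pick_UNIV)
qed (simp_all add: dim_submatrix)

lemma submatrix_carrier_mat:
  assumes "A \<in> carrier_mat nr nc"
  shows "submatrix A I J \<in> carrier_mat (card (I \<inter> {..<nr})) (card (J \<inter> {..<nc}))"
  by (rule carrier_matI)
    (unfold dim_submatrix carrier_matD[OF assms], (intro arg_cong[where f = card], auto)+)

lemma col_submatrix_UNIV:
  assumes j: "j < card {j. j < dim_col A \<and> j \<in> T}"
  shows "col (submatrix A UNIV T) j = col A (pick T j)"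
proof (rule eq_vecI)
  fix i assume "i < dim_vec (col A (pick T j))"
  then show "col (submatrix A UNIV T) j $ i = col A (pick T j) $ i"
    using j pick_le[OF j] by (simp add: dim_submatrix submatrix_index pick_UNIV)
qed (simp add: dim_submatrix)

lemma index_sets_subset: "S \<in> index_sets k n \<Longrightarrow> S \<subseteq> {..<n}"
  and card_index_sets: "S \<in> index_sets k n \<Longrightarrow> card S = k"
  unfolding index_sets_def by auto

lemma finite_index_sets [simp]: "finite (index_sets k n)"
  unfolding index_sets_def by (rule finite_subset[of _ "Pow {..<n}"]) auto

lemma index_sets_empty:
  assumes "n < k"
  shows "index_sets k n = {}"
proof -
  have "card S \<le> n" if "S \<subseteq> {..<n}" for S using card_mono[OF finite_lessThan that] by simp
  then show ?thesis using assms unfolding index_sets_def by (auto simp: not_le[symmetric])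
qed

lemma index_sets_eq_card_diff:
  assumes "e \<le> m"
  shows "{S. S \<subseteq> {..<m} \<and> m - card S = e} = index_sets (m - e) m"
proof -
  have "card S \<le> m" if "S \<subseteq> {..<m}" for S using card_mono[OF _ that] by simp
  then show ?thesis unfolding index_sets_def using assms by fastforce
qed

section \<open>Principal minors as coefficients of a shifted determinant\<close>

lemma sum_permutes_map_permutation:
  assumes f: "bij_betw f A B"
  shows "(\<Sum>p\<in>{p. p permutes B}. g p) = (\<Sum>q\<in>{q. q permutes A}. g (map_permutation A f q))"
proof -
  have f': "bij_betw (inv_into A f) B A" using f by (rule bij_betw_inv_into)
  have inv: "map_permutation A f (map_permutation B (inv_into A f) p) = p" if "p permutes B" for p
    using that f f' by (intro map_permutation_compose_inv) (auto simp: bij_betw_inv_into_right)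
  show ?thesis
  proof (rule sum.reindex_bij_witness[where i = "map_permutation A f"
        and j = "map_permutation B (inv_into A f)"])
    show "map_permutation A f q \<in> {p. p permutes B}" if "q \<in> {q. q permutes A}" for q
      using map_permutation_permutes[OF f] that by simp
    show "map_permutation B (inv_into A f) (map_permutation A f q) = q" if "q \<in> {q. q permutes A}" for q
      using that f by (intro map_permutation_compose_inv) (auto simp: bij_betw_inv_into_left)
    show "map_permutation B (inv_into A f) p \<in> {q. q permutes A}" if "p \<in> {p. p permutes B}" for p
      using map_permutation_permutes[OF f'] that by simp
  qed (simp_all add: inv)
qed

lemma det_submatrix_eq_sum_permutes:
  fixes M :: "'a::comm_ring_1 mat"
  assumes S: "S \<subseteq> {..<dim_row M}" "S \<subseteq> {..<dim_col M}"
  shows "det (submatrix M S S) = (\<Sum>p\<in>{p. p permutes S}. signof p * (\<Prod>i\<in>S. M $$ (i, p i)))"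
proof -
  define k where "k = card S"
  have fin: "finite S" using S finite_subset by blast
  have bij: "bij_betw (pick S) {..<k} S" unfolding k_def using bij_betw_pick[OF fin] .
  then have inj: "inj_on (pick S) {..<k}" by (rule bij_betw_imp_inj_on)
  have "{i. i < dim_row M \<and> i \<in> S} = S" "{i. i < dim_col M \<and> i \<in> S} = S" using S by auto
  then have sub: "submatrix M S S = mat k k (\<lambda>(a,b). M $$ (pick S a, pick S b))"
    unfolding submatrix_def k_def by simp
  have "det (submatrix M S S)
      = (\<Sum>q\<in>{q. q permutes {..<k}}. signof q * (\<Prod>a<k. M $$ (pick S a, pick S (q a))))"
    unfolding sub det_def'[OF mat_carrier] lessThan_atLeast0
    by (intro sum.cong refl arg_cong2[where f="(*)"] prod.cong) (auto simp: permutes_in_image)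
  also have "\<dots> = (\<Sum>q\<in>{q. q permutes {..<k}}. signof (map_permutation {..<k} (pick S) q) *
      (\<Prod>i\<in>S. M $$ (i, map_permutation {..<k} (pick S) q i)))"
  proof (intro sum.cong refl)
    fix q assume "q \<in> {q. q permutes {..<k}}"
    then have q: "q permutes {..<k}" by simp
    have "(\<Prod>i\<in>S. M $$ (i, map_permutation {..<k} (pick S) q i))
        = (\<Prod>a<k. M $$ (pick S a, map_permutation {..<k} (pick S) q (pick S a)))"
      using bij by (rule prod.reindex_bij_betw[symmetric])
    also have "\<dots> = (\<Prod>a<k. M $$ (pick S a, pick S (q a)))"
      using inj by (intro prod.cong refl) (simp add: map_permutation_apply)
    finally show "signof q * (\<Prod>a<k. M $$ (pick S a, pick S (q a)))
      = signof (map_permutation {..<k} (pick S) q) *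
      (\<Prod>i\<in>S. M $$ (i, map_permutation {..<k} (pick S) q i))"
      using sign_map_permutation[OF inj q] by simp
  qed
  also have "\<dots> = (\<Sum>p\<in>{p. p permutes S}. signof p * (\<Prod>i\<in>S. M $$ (i, p i)))"
    using bij by (rule sum_permutes_map_permutation[symmetric])
  finally show ?thesis .
qed

lemma permutes_fixing_complement:
  assumes "S \<subseteq> U"
  shows "{p. p permutes U \<and> (\<forall>i\<in>U - S. p i = i)} = {p. p permutes S}"
proof -
  have "p permutes S" if "p permutes U" "\<forall>i\<in>U - S. p i = i" for p
    using that unfolding permutes_def by blast
  moreover have "p permutes U \<and> (\<forall>i\<in>U - S. p i = i)" if "p permutes S" for p
    using that permutes_subset[OF that assms] permutes_not_in[OF that] by auto
  ultimately show ?thesis by blast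
qed

lemma prod_if_fixed:
  fixes c :: "nat \<Rightarrow> 'a::comm_ring_1"
  assumes "finite A"
  shows "(\<Prod>i\<in>A. if i = p i then c i else 0) = (if \<forall>i\<in>A. p i = i then \<Prod>i\<in>A. c i else 0)"
proof (cases "\<forall>i\<in>A. p i = i")
  case False
  then obtain i where "i \<in> A" "p i \<noteq> i" by auto
  then show ?thesis using assms False by (intro trans[OF prod_zero]) (auto intro!: bexI[of _ i])
qed (auto intro!: prod.cong)

lemma det_add_mat_diag:
  fixes M :: "'a::comm_ring_1 mat"
  assumes M: "M \<in> carrier_mat m m"
  shows "det (M + mat_diag m c) = (\<Sum>S\<in>Pow {..<m}. (\<Prod>i\<in>{..<m} - S. c i) * det (submatrix M S S))"
proof -
  define U where "U = {..<m}"
  let ?t = "\<lambda>p S. signof p * ((\<Prod>i\<in>S. M $$ (i, p i)) * (\<Prod>i\<in>U - S. if i = p i then c i else 0))"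
  have D: "M + mat_diag m c \<in> carrier_mat m m" using M by simp
  have "det (M + mat_diag m c)
      = (\<Sum>p\<in>{p. p permutes U}. signof p * (\<Prod>i\<in>U. M $$ (i, p i) + (if i = p i then c i else 0)))"
    unfolding det_def'[OF D] U_def lessThan_atLeast0
    using M by (intro sum.cong refl arg_cong2[where f="(*)"] prod.cong)
      (auto simp: mat_diag_def permutes_in_image)
  also have "\<dots> = (\<Sum>p\<in>{p. p permutes U}. \<Sum>S\<in>Pow U. ?t p S)"
    by (simp add: prod_add U_def sum_distrib_left)
  also have "\<dots> = (\<Sum>S\<in>Pow U. \<Sum>p\<in>{p. p permutes U}. ?t p S)"
    by (rule sum.swap)
  also have "\<dots> = (\<Sum>S\<in>Pow U. (\<Prod>i\<in>U - S. c i) * det (submatrix M S S))"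
  proof (rule sum.cong[OF refl])
    fix S assume S: "S \<in> Pow U"
    have "(\<Sum>p\<in>{p. p permutes U}. ?t p S)
      = (\<Sum>p\<in>{p. p permutes U}. if \<forall>i\<in>U - S. p i = i
          then (\<Prod>i\<in>U - S. c i) * (signof p * (\<Prod>i\<in>S. M $$ (i, p i))) else 0)"
      by (intro sum.cong refl) (auto simp: prod_if_fixed U_def)
    also have "\<dots> = (\<Prod>i\<in>U - S. c i) *
        (\<Sum>p\<in>{p. p permutes U \<and> (\<forall>i\<in>U - S. p i = i)}. signof p * (\<Prod>i\<in>S. M $$ (i, p i)))"
      by (subst sum.inter_filter[symmetric]) (auto simp: U_def finite_permutations sum_distrib_left)
    also have "\<dots> = (\<Prod>i\<in>U - S. c i) * det (submatrix M S S)"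
      using S M by (simp add: permutes_fixing_complement det_submatrix_eq_sum_permutes U_def)
    finally show "(\<Sum>p\<in>{p. p permutes U}. ?t p S) = (\<Prod>i\<in>U - S. c i) * det (submatrix M S S)" .
  qed
  finally show ?thesis unfolding U_def .
qed

(* M + lambda * diag(d) over polynomials, lambda = [:0,1:], with d_i = 0 for i in J and d_i = 1
   otherwise. With J = {j} and row j of M replaced by b this is the paper's (M + lambda I)_{j.}(b). *)
definition shift_poly_matrix :: "'a::comm_ring_1 mat \<Rightarrow> nat set \<Rightarrow> 'a poly mat" where
  "shift_poly_matrix M J = map_mat (\<lambda>a. [:a:]) M + mat_diag (dim_row M) (\<lambda>i. if i \<in> J then 0 else [:0,1:])"

interpretation const_poly_hom: comm_ring_hom "\<lambda>a::'a::comm_ring_1. [:a:]"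
  by unfold_locales (auto simp: one_pCons)

lemma shift_poly_matrix_carrier [simp]:
  "M \<in> carrier_mat m m \<Longrightarrow> shift_poly_matrix M J \<in> carrier_mat m m"
  unfolding shift_poly_matrix_def by simp

lemma dim_shift_poly_matrix [simp]:
  "dim_row (shift_poly_matrix M J) = dim_row M" "dim_col (shift_poly_matrix M J) = dim_row M"
  unfolding shift_poly_matrix_def mat_diag_def by simp_all

lemma shift_poly_matrix_index:
  "M \<in> carrier_mat m m \<Longrightarrow> i < m \<Longrightarrow> l < m \<Longrightarrow>
   shift_poly_matrix M J $$ (i, l) = [:M $$ (i, l):] + (if i = l \<and> i \<notin> J then [:0,1:] else 0)"
  unfolding shift_poly_matrix_def mat_diag_def by auto

lemma X_pow_eq_monom: "[:0,1:] ^ n = monom 1 n"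
  by (simp add: monom_altdef)

lemma coeff_det_shift_poly_matrix:
  fixes M :: "'a::comm_ring_1 mat"
  assumes M: "M \<in> carrier_mat m m" and J: "J \<subseteq> {..<m}" and k: "k \<le> m"
  shows "coeff (det (shift_poly_matrix M J)) (m - k)
    = (\<Sum>S\<in>{S\<in>index_sets k m. J \<subseteq> S}. det (principal_submatrix M S))"
proof -
  define c where "c = (\<lambda>i. if i \<in> J then 0 else [:0,1:] :: 'a poly)"
  have prod_c: "(\<Prod>i\<in>{..<m} - S. c i) = (if J \<subseteq> S then monom 1 (m - card S) else 0)"
    if S: "S \<subseteq> {..<m}" for S
  proof (cases "J \<subseteq> S")
    case True
    then have "(\<Prod>i\<in>{..<m} - S. c i) = (\<Prod>i\<in>{..<m} - S. [:0,1:])"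
      unfolding c_def by (intro prod.cong) auto
    then show ?thesis using True S by (simp add: card_Diff_subset finite_subset monom_altdef)
  next
    case False
    then obtain i where "i \<in> J" "i \<notin> S" by auto
    then show ?thesis using False J unfolding c_def by (intro trans[OF prod_zero]) (auto intro!: bexI[of _ i])
  qed
  have det_eq: "det (shift_poly_matrix M J)
      = (\<Sum>S\<in>Pow {..<m}. smult (det (submatrix M S S)) (\<Prod>i\<in>{..<m} - S. c i))"
    using det_add_mat_diag[of "map_mat (\<lambda>a. [:a:]) M" m c] M
    by (simp add: shift_poly_matrix_def c_def submatrix_map_mat const_poly_hom.hom_det)
  have "coeff (det (shift_poly_matrix M J)) (m - k)
      = (\<Sum>S\<in>Pow {..<m}. if J \<subseteq> S \<and> m - card S = m - k then det (submatrix M S S) else 0)"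
    unfolding det_eq coeff_sum by (intro sum.cong refl) (auto simp: prod_c coeff_monom)
  also have "\<dots> = (\<Sum>S\<in>{S. S \<subseteq> {..<m} \<and> m - card S = m - k} \<inter> {S. J \<subseteq> S}. det (submatrix M S S))"
    by (subst sum.inter_filter[symmetric]) (auto intro!: sum.cong)
  also have "{S. S \<subseteq> {..<m} \<and> m - card S = m - k} \<inter> {S. J \<subseteq> S} = {S\<in>index_sets k m. J \<subseteq> S}"
    using index_sets_eq_card_diff[of "m - k" m] k by auto
  finally show ?thesis unfolding principal_submatrix_def .
qed

lemma coeff_0_det_shift_poly_matrix:
  assumes M: "M \<in> carrier_mat m m"
  shows "coeff (det (shift_poly_matrix M J)) 0 = det M"
proof -
  have S: "shift_poly_matrix M J \<in> carrier_mat m m" using M by simp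
  have "map_mat (\<lambda>p. poly p 0) (shift_poly_matrix M J) = M"
    by (rule eq_matI) (use M in \<open>auto simp: shift_poly_matrix_index carrier_matD[OF S]\<close>)
  then show ?thesis
    using comm_ring_hom.hom_det[OF poly_hom.comm_ring_hom_axioms, of 0 "shift_poly_matrix M J"]
    by (simp add: poly_0_coeff_0)
qed

section \<open>The Cauchy--Binet formula\<close>

lemma det_four_block_eq_det_add_mult:
  fixes C :: "'a::idom mat"
  assumes C: "C \<in> carrier_mat p q" and D: "D \<in> carrier_mat q p"
  shows "det (four_block_mat (x \<cdot>\<^sub>m 1\<^sub>m p) (- C) D (1\<^sub>m q)) = det (x \<cdot>\<^sub>m 1\<^sub>m p + C * D)"
proof -
  let ?U = "four_block_mat (x \<cdot>\<^sub>m 1\<^sub>m p) (- C) D (1\<^sub>m q)"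
  let ?V = "four_block_mat (1\<^sub>m p) (0\<^sub>m p q) (- D) (1\<^sub>m q)"
  have U: "?U \<in> carrier_mat (p + q) (p + q)" and V: "?V \<in> carrier_mat (p + q) (p + q)"
    using C D by auto
  have "?U * ?V = four_block_mat (x \<cdot>\<^sub>m 1\<^sub>m p * 1\<^sub>m p + - C * - D) (x \<cdot>\<^sub>m 1\<^sub>m p * 0\<^sub>m p q + - C * 1\<^sub>m q)
      (D * 1\<^sub>m p + 1\<^sub>m q * - D) (D * 0\<^sub>m p q + 1\<^sub>m q * 1\<^sub>m q)"
    by (rule mult_four_block_mat) (use C D in auto)
  also have "\<dots> = four_block_mat (x \<cdot>\<^sub>m 1\<^sub>m p + C * D) (- C) (0\<^sub>m q p) (1\<^sub>m q)"
    using C D by (intro arg_cong4[where f = four_block_mat]) (auto intro!: eq_matI)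
  finally have UV: "?U * ?V = four_block_mat (x \<cdot>\<^sub>m 1\<^sub>m p + C * D) (- C) (0\<^sub>m q p) (1\<^sub>m q)" .
  have "det ?V = 1"
    using det_four_block_mat_upper_right_zero[of "1\<^sub>m p" p "0\<^sub>m p q" q "- D" "1\<^sub>m q"] D by simp
  then have "det ?U = det (?U * ?V)" using det_mult[OF U V] by simp
  also have "\<dots> = det (x \<cdot>\<^sub>m 1\<^sub>m p + C * D)"
    unfolding UV using C D by (subst det_four_block_mat_lower_left_zero[of _ p _ q]) auto
  finally show ?thesis .
qed

lemma pow_mult_det_four_block_eq_det_add_mult:
  fixes C :: "'a::idom mat"
  assumes C: "C \<in> carrier_mat p q" and D: "D \<in> carrier_mat q p"
  shows "x ^ q * det (four_block_mat (x \<cdot>\<^sub>m 1\<^sub>m p) (- C) D (1\<^sub>m q)) = x ^ p * det (x \<cdot>\<^sub>m 1\<^sub>m q + D * C)"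
proof -
  let ?U = "four_block_mat (x \<cdot>\<^sub>m 1\<^sub>m p) (- C) D (1\<^sub>m q)"
  let ?V = "four_block_mat (1\<^sub>m p) (0\<^sub>m p q) (- D) (x \<cdot>\<^sub>m 1\<^sub>m q)"
  have U: "?U \<in> carrier_mat (p + q) (p + q)" and V: "?V \<in> carrier_mat (p + q) (p + q)"
    using C D by auto
  have "?V * ?U = four_block_mat (1\<^sub>m p * (x \<cdot>\<^sub>m 1\<^sub>m p) + 0\<^sub>m p q * D) (1\<^sub>m p * - C + 0\<^sub>m p q * 1\<^sub>m q)
      (- D * (x \<cdot>\<^sub>m 1\<^sub>m p) + x \<cdot>\<^sub>m 1\<^sub>m q * D) (- D * - C + x \<cdot>\<^sub>m 1\<^sub>m q * 1\<^sub>m q)"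
    by (rule mult_four_block_mat) (use C D in auto)
  also have "\<dots> = four_block_mat (x \<cdot>\<^sub>m 1\<^sub>m p) (- C) (0\<^sub>m q p) (x \<cdot>\<^sub>m 1\<^sub>m q + D * C)"
    using C D by (intro arg_cong4[where f = four_block_mat]) (auto intro!: eq_matI simp: ac_simps)
  finally have VU: "?V * ?U = four_block_mat (x \<cdot>\<^sub>m 1\<^sub>m p) (- C) (0\<^sub>m q p) (x \<cdot>\<^sub>m 1\<^sub>m q + D * C)" .
  have "det ?V = x ^ q"
    using det_four_block_mat_upper_right_zero[of "1\<^sub>m p" p "0\<^sub>m p q" q "- D" "x \<cdot>\<^sub>m 1\<^sub>m q"] D by simp
  then have "x ^ q * det ?U = det (?V * ?U)" using det_mult[OF V U] by simp
  also have "\<dots> = x ^ p * det (x \<cdot>\<^sub>m 1\<^sub>m q + D * C)"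
    unfolding VU using C D by (subst det_four_block_mat_lower_left_zero[of _ p _ q]) auto
  finally show ?thesis .
qed

lemma sylvester_det_shift_poly_matrix:
  fixes C :: "'a::idom mat"
  assumes C: "C \<in> carrier_mat p q" and D: "D \<in> carrier_mat q p"
  shows "[:0,1:] ^ q * det (shift_poly_matrix (C * D) {}) = [:0,1:] ^ p * det (shift_poly_matrix (D * C) {})"
proof -
  have shift: "shift_poly_matrix (F * G) {}
      = [:0,1:] \<cdot>\<^sub>m 1\<^sub>m k + map_mat (\<lambda>a. [:a:]) F * map_mat (\<lambda>a. [:a:]) G"
    if "F \<in> carrier_mat k l" "G \<in> carrier_mat l k" for F G :: "'a mat" and k l
    unfolding const_poly_hom.mat_hom_mult[OF that, symmetric] shift_poly_matrix_def mat_diag_def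
    using that by (intro eq_matI) auto
  show ?thesis
    using pow_mult_det_four_block_eq_det_add_mult[of "map_mat (\<lambda>a. [:a:]) C" p q
        "map_mat (\<lambda>a. [:a:]) D" "[:0,1:]"]
      det_four_block_eq_det_add_mult[of "map_mat (\<lambda>a. [:a:]) C" p q "map_mat (\<lambda>a. [:a:]) D" "[:0,1:]"]
      C D by (simp add: shift)
qed

lemma cauchy_binet:
  fixes C :: "'a::idom mat"
  assumes C: "C \<in> carrier_mat k q" and D: "D \<in> carrier_mat q k"
  shows "det (C * D) = (\<Sum>T\<in>index_sets k q. det (submatrix C UNIV T) * det (submatrix D T UNIV))"
proof -
  let ?P = "det (shift_poly_matrix (D * C) {})"
  \<comment> \<open>compare the coefficients of \<open>\<lambda>\<^sup>q\<close> in Sylvester's identity\<close>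
  have "det (C * D) = coeff (monom 1 q * det (shift_poly_matrix (C * D) {})) q"
    using coeff_0_det_shift_poly_matrix[OF mult_carrier_mat[OF C D]] by (simp add: coeff_monom_mult)
  also have "\<dots> = coeff (monom 1 k * ?P) q"
    using sylvester_det_shift_poly_matrix[OF C D] unfolding X_pow_eq_monom by (rule arg_cong)
  also have "\<dots> = (\<Sum>T\<in>index_sets k q. det (submatrix (D * C) T T))"
  proof (cases "k \<le> q")
    case True
    then have "coeff (monom 1 k * ?P) q = coeff ?P (q - k)" by (simp add: coeff_monom_mult)
    also have "\<dots> = (\<Sum>T\<in>index_sets k q. det (submatrix (D * C) T T))"
      using coeff_det_shift_poly_matrix[OF mult_carrier_mat[OF D C], of "{}" k] True
      by (simp add: principal_submatrix_def)
    finally show ?thesis .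
  qed (simp add: coeff_monom_mult index_sets_empty)
  also have "\<dots> = (\<Sum>T\<in>index_sets k q. det (submatrix C UNIV T) * det (submatrix D T UNIV))"
  proof (rule sum.cong[OF refl])
    fix T assume T: "T \<in> index_sets k q"
    have T': "T \<inter> {..<q} = T" and cT: "card T = k"
      using index_sets_subset[OF T] card_index_sets[OF T] by auto
    have CT: "submatrix C UNIV T \<in> carrier_mat k k" and DT: "submatrix D T UNIV \<in> carrier_mat k k"
      using submatrix_carrier_mat[OF C, of UNIV T] submatrix_carrier_mat[OF D, of T UNIV]
      unfolding T' cT by simp_all
    show "det (submatrix (D * C) T T) = det (submatrix C UNIV T) * det (submatrix D T UNIV)"
      unfolding submatrix_mult[OF D C] det_mult[OF DT CT] by (rule mult.commute)
  qed
  finally show ?thesis .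
qed

section \<open>Principal minors of \<open>A A\<^sup>*\<close>\<close>

lemma mat_adjoint_carrier [simp]: "A \<in> carrier_mat m n \<Longrightarrow> mat_adjoint A \<in> carrier_mat n m"
  and dim_mat_adjoint [simp]: "dim_row (mat_adjoint A) = dim_col A" "dim_col (mat_adjoint A) = dim_row A"
  and index_mat_adjoint [simp]:
    "i < dim_col A \<Longrightarrow> j < dim_row A \<Longrightarrow> mat_adjoint A $$ (i, j) = conjugate (A $$ (j, i))"
  unfolding mat_adjoint_def by (auto simp: mat_of_rows_def)

lemma mat_adjoint_mat_adjoint [simp]: "mat_adjoint (mat_adjoint A) = A"
  by (intro eq_matI) auto

lemma submatrix_mat_adjoint: "submatrix (mat_adjoint A) I J = mat_adjoint (submatrix A J I)"
proof (rule eq_matI)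
  fix i j assume "i < dim_row (mat_adjoint (submatrix A J I))"
    and "j < dim_col (mat_adjoint (submatrix A J I))"
  then have i: "i < card {i. i < dim_col A \<and> i \<in> I}" and j: "j < card {j. j < dim_row A \<and> j \<in> J}"
    by (simp_all add: dim_submatrix)
  then show "submatrix (mat_adjoint A) I J $$ (i, j) = mat_adjoint (submatrix A J I) $$ (i, j)"
    using pick_le[OF i] pick_le[OF j] by (simp add: submatrix_index dim_submatrix)
qed (simp_all add: dim_submatrix)

interpretation cnj_hom: comm_ring_hom cnj
  by unfold_locales auto

lemma det_mat_adjoint:
  fixes K :: "complex mat"
  assumes K: "K \<in> carrier_mat k k"
  shows "det (mat_adjoint K) = cnj (det K)"
proof -
  have "mat_adjoint K = transpose_mat (map_mat cnj K)"
    using K by (intro eq_matI) auto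
  then show ?thesis using K by (simp add: det_transpose)
qed

lemma cauchy_binet_mat_adjoint:
  fixes C :: "complex mat"
  assumes C: "C \<in> carrier_mat k q"
  shows "det (C * mat_adjoint C) = of_real (\<Sum>T\<in>index_sets k q. (cmod (det (submatrix C UNIV T)))\<^sup>2)"
proof -
  have "det (submatrix (mat_adjoint C) T UNIV) = cnj (det (submatrix C UNIV T))"
    if "T \<in> index_sets k q" for T
    using submatrix_carrier_mat[OF C, of UNIV T] index_sets_subset[OF that] card_index_sets[OF that]
    by (simp add: submatrix_mat_adjoint det_mat_adjoint Int_absorb2)
  then show ?thesis
    unfolding cauchy_binet[OF C mat_adjoint_carrier[OF C]] of_real_sum
    by (intro sum.cong refl) (subst complex_norm_square, simp)
qed

lemma det_principal_submatrix_mult_adjoint: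
  fixes A :: "complex mat"
  assumes A: "A \<in> carrier_mat m n" and S: "S \<subseteq> {..<m}"
  shows "det (principal_submatrix (A * mat_adjoint A) S)
    = of_real (\<Sum>T\<in>index_sets (card S) n. (cmod (det (submatrix A S T)))\<^sup>2)"
proof -
  have AS: "submatrix A S UNIV \<in> carrier_mat (card S) n"
    using submatrix_carrier_mat[OF A, of S UNIV] S by (simp add: Int_absorb2)
  have "principal_submatrix (A * mat_adjoint A) S = submatrix A S UNIV * mat_adjoint (submatrix A S UNIV)"
    unfolding principal_submatrix_def submatrix_mult[OF A mat_adjoint_carrier[OF A]] submatrix_mat_adjoint ..
  then show ?thesis
    by (simp add: cauchy_binet_mat_adjoint[OF AS] submatrix_submatrix_UNIV)
qed

lemma sum_principal_minors_mult_adjoint: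
  fixes A :: "complex mat"
  assumes A: "A \<in> carrier_mat m n"
  shows "(\<Sum>S\<in>index_sets k m. det (principal_submatrix (A * mat_adjoint A) S))
    = of_real (\<Sum>S\<in>index_sets k m. \<Sum>T\<in>index_sets k n. (cmod (det (submatrix A S T)))\<^sup>2)"
  unfolding of_real_sum[of _ "index_sets k m"]
proof (rule sum.cong[OF refl])
  fix S assume "S \<in> index_sets k m"
  then show "det (principal_submatrix (A * mat_adjoint A) S)
    = of_real (\<Sum>T\<in>index_sets k n. (cmod (det (submatrix A S T)))\<^sup>2)"
    using det_principal_submatrix_mult_adjoint[OF A] index_sets_subset card_index_sets by metis
qed

lemma sum_principal_minors_mult_adjoint_above_rank:
  fixes A :: "complex mat"
  assumes A: "A \<in> carrier_mat m n" and k: "vec_space.rank m A < k"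
  shows "(\<Sum>S\<in>index_sets k m. det (principal_submatrix (A * mat_adjoint A) S)) = 0"
proof -
  have "det (submatrix A S T) = 0" if "S \<in> index_sets k m" "T \<in> index_sets k n" for S T
  proof (rule ccontr)
    assume "det (submatrix A S T) \<noteq> 0"
    then have "card {j. j < n \<and> j \<in> T} \<le> vec_space.rank m A" by (rule vec_space.rank_gt_minor[OF A])
    moreover have "{j. j < n \<and> j \<in> T} = T" using index_sets_subset[OF that(2)] by auto
    ultimately show False using card_index_sets[OF that(2)] k by simp
  qed
  then show ?thesis unfolding sum_principal_minors_mult_adjoint[OF A] by simp
qed

lemma cscalar_prod_mult_mat_vec_adjoint:
  fixes K :: "complex mat"
  assumes K: "K \<in> carrier_mat p r" and v: "v \<in> carrier_vec r" and w: "w \<in> carrier_vec p"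
  shows "(K *\<^sub>v v) \<bullet>c w = v \<bullet>c (mat_adjoint K *\<^sub>v w)"
proof -
  have "(K *\<^sub>v v) \<bullet>c w = (\<Sum>l<p. \<Sum>a<r. K $$ (l, a) * v $ a * cnj (w $ l))"
    using K v w by (simp add: scalar_prod_def lessThan_atLeast0 sum_distrib_right)
  also have "\<dots> = (\<Sum>a<r. \<Sum>l<p. K $$ (l, a) * v $ a * cnj (w $ l))"
    by (rule sum.swap)
  also have "\<dots> = v \<bullet>c (mat_adjoint K *\<^sub>v w)"
    using K v w by (simp add: scalar_prod_def lessThan_atLeast0 sum_distrib_left ac_simps)
  finally show ?thesis .
qed

lemma mult_mat_vec_eq_0_of_adjoint_mult:
  fixes K :: "complex mat"
  assumes K: "K \<in> carrier_mat p r" and v: "v \<in> carrier_vec r"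
    and Kv: "(mat_adjoint K * K) *\<^sub>v v = 0\<^sub>v r"
  shows "K *\<^sub>v v = 0\<^sub>v p"
proof -
  have "(K *\<^sub>v v) \<bullet>c (K *\<^sub>v v) = v \<bullet>c ((mat_adjoint K * K) *\<^sub>v v)"
    using K v assoc_mult_mat_vec[OF mat_adjoint_carrier[OF K] K v]
    by (simp add: cscalar_prod_mult_mat_vec_adjoint[OF K v])
  then have "(K *\<^sub>v v) \<bullet>c (K *\<^sub>v v) = 0" using Kv v by simp
  moreover have "K *\<^sub>v v \<in> carrier_vec p" using K v by simp
  ultimately show ?thesis by simp
qed

lemma (in vec_space) exists_injective_column_submatrix:
  assumes A: "A \<in> carrier_mat n nc"
  obtains T where "T \<subseteq> {..<nc}" "card T = rank A"
    "\<And>w. w \<in> carrier_vec (card T) \<Longrightarrow> submatrix A UNIV T *\<^sub>v w = 0\<^sub>v n \<Longrightarrow> w = 0\<^sub>v (card T)"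
proof -
  obtain S where maxS: "maximal S (\<lambda>T. T \<subseteq> set (cols A) \<and> lin_indpt T)"
    using maximal_exists[of "\<lambda>T. T \<subseteq> set (cols A) \<and> lin_indpt T" "card (set (cols A))" "{}"]
    by (meson List.finite_set card_mono empty_iff empty_subsetI finite_lin_indpt2 rev_finite_subset)
  have S: "S \<subseteq> set (cols A)" "lin_indpt S" using maxS unfolding maximal_def by auto
  define idx where "idx v = find_first v (cols A)" for v
  define T where "T = idx ` S"
  have idx: "idx v < nc" "col A (idx v) = v" if "v \<in> S" for v
    using that S(1) A find_first_le[of v "cols A"] nth_find_first[of v "cols A"] by (auto simp: idx_def)
  have T: "T \<subseteq> {..<nc}" using idx(1) unfolding T_def by auto
  have bij: "bij_betw (col A) T S"
    by (rule bij_betw_byWitness[where f' = idx]) (auto simp: T_def idx(2))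
  have finT: "finite T" using T finite_subset by blast
  define AT where "AT = submatrix A UNIV T"
  have cT: "{j. j < nc \<and> j \<in> T} = T" using T by auto
  have AT: "AT \<in> carrier_mat n (card T)"
    using submatrix_carrier_mat[OF A, of UNIV T] T unfolding AT_def by (simp add: Int_absorb2)
  have col_AT: "col AT b = (col A \<circ> pick T) b" if "b < card T" for b
    using col_submatrix_UNIV[of b A T] that A cT unfolding AT_def by simp
  have inj: "inj_on (col A \<circ> pick T) {..<card T}"
    using bij_betw_pick[OF finT] bij by (intro comp_inj_on) (auto simp: bij_betw_def)
  have cols_AT: "cols AT = map (col A \<circ> pick T) [0..<card T]"
    using AT col_AT by (intro nth_equalityI) auto
  have "pick T ` {..<card T} = T" using bij_betw_pick[OF finT] by (simp add: bij_betw_def)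
  then have "set (cols AT) = col A ` T"
    unfolding cols_AT set_map set_upt image_comp[symmetric] atLeast0LessThan by simp
  also have "\<dots> = S" using bij by (simp add: bij_betw_def)
  finally have set_cols: "set (cols AT) = S" .
  have dist: "distinct (cols AT)" using inj unfolding cols_AT by (simp add: distinct_map atLeast_upt)
  show thesis
  proof
    show "T \<subseteq> {..<nc}" by (rule T)
    show "card T = rank A" using rank_card_indpt[OF A maxS] bij_betw_same_card[OF bij] by simp
    fix w assume w: "w \<in> carrier_vec (card T)" and zero: "submatrix A UNIV T *\<^sub>v w = 0\<^sub>v n"
    show "w = 0\<^sub>v (card T)"
    proof (rule ccontr)
      assume "w \<noteq> 0\<^sub>v (card T)"
      from lin_depI[OF AT w this zero[folded AT_def] dist] show False using S(2) set_cols by simp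
    qed
  qed
qed

lemma exists_nonzero_minor_rank:
  fixes A :: "complex mat"
  assumes A: "A \<in> carrier_mat m n"
  obtains S T where "S \<in> index_sets (vec_space.rank m A) m" "T \<in> index_sets (vec_space.rank m A) n"
    "det (submatrix A S T) \<noteq> 0"
proof -
  define r where "r = vec_space.rank m A"
  obtain T where T: "T \<subseteq> {..<n}" "card T = r"
    and inj: "\<And>w. w \<in> carrier_vec r \<Longrightarrow> submatrix A UNIV T *\<^sub>v w = 0\<^sub>v m \<Longrightarrow> w = 0\<^sub>v r"
    using vec_space.exists_injective_column_submatrix[OF A] unfolding r_def by metis
  define AT where "AT = submatrix A UNIV T"
  have AT: "AT \<in> carrier_mat m r"
    using submatrix_carrier_mat[OF A, of UNIV T] T by (simp add: AT_def Int_absorb2)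
  \<comment> \<open>the Gram matrix of independent columns is invertible, and by Cauchy--Binet its determinant
    is the sum of the squared moduli of the \<open>r \<times> r\<close> minors in these columns\<close>
  have "det (mat_adjoint AT * AT) \<noteq> 0"
  proof
    assume "det (mat_adjoint AT * AT) = 0"
    then obtain v where "v \<in> carrier_vec r" "v \<noteq> 0\<^sub>v r" "(mat_adjoint AT * AT) *\<^sub>v v = 0\<^sub>v r"
      using det_0_iff_vec_prod_zero_field[OF mult_carrier_mat[OF mat_adjoint_carrier[OF AT] AT]] by blast
    then show False using inj mult_mat_vec_eq_0_of_adjoint_mult[OF AT] unfolding AT_def by blast
  qed
  moreover have "det (mat_adjoint AT * AT) = of_real (\<Sum>S\<in>index_sets r m. (cmod (det (submatrix A S T)))\<^sup>2)"
  proof -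
    have "det (mat_adjoint AT * AT)
        = of_real (\<Sum>S\<in>index_sets r m. (cmod (det (submatrix (mat_adjoint AT) UNIV S)))\<^sup>2)"
      using cauchy_binet_mat_adjoint[OF mat_adjoint_carrier[OF AT]] by simp
    also have "\<dots> = of_real (\<Sum>S\<in>index_sets r m. (cmod (det (submatrix A S T)))\<^sup>2)"
    proof (intro arg_cong[where f = of_real] sum.cong refl)
      fix S assume S: "S \<in> index_sets r m"
      have "submatrix A S T \<in> carrier_mat r r"
        using submatrix_carrier_mat[OF A, of S T] T index_sets_subset[OF S] card_index_sets[OF S]
        by (simp add: Int_absorb2)
      then show "(cmod (det (submatrix (mat_adjoint AT) UNIV S)))\<^sup>2 = (cmod (det (submatrix A S T)))\<^sup>2"
        unfolding submatrix_mat_adjoint AT_def submatrix_split[symmetric] by (simp add: det_mat_adjoint)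
    qed
    finally show ?thesis .
  qed
  ultimately obtain S where "S \<in> index_sets r m" "det (submatrix A S T) \<noteq> 0"
    by (metis (mono_tags, lifting) of_real_0 power_zero_numeral sum.neutral zero_eq_power2 norm_zero)
  moreover have "T \<in> index_sets r n" using T unfolding index_sets_def by simp
  ultimately show thesis using that unfolding r_def by blast
qed

lemma sum_principal_minors_mult_adjoint_rank_neq_0:
  fixes A :: "complex mat"
  assumes A: "A \<in> carrier_mat m n"
  shows "(\<Sum>S\<in>index_sets (vec_space.rank m A) m. det (principal_submatrix (A * mat_adjoint A) S)) \<noteq> 0"
proof -
  define r where "r = vec_space.rank m A"
  obtain S T where S: "S \<in> index_sets r m" and T: "T \<in> index_sets r n" and ST: "det (submatrix A S T) \<noteq> 0"
    using exists_nonzero_minor_rank[OF A] unfolding r_def by blast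
  have "0 < (\<Sum>T\<in>index_sets r n. (cmod (det (submatrix A S T)))\<^sup>2)"
    using ST by (intro sum_pos2[OF _ T]) auto
  then have "0 < (\<Sum>S\<in>index_sets r m. \<Sum>T\<in>index_sets r n. (cmod (det (submatrix A S T)))\<^sup>2)"
    by (intro sum_pos2[OF _ S]) (auto intro: sum_nonneg)
  then show ?thesis unfolding r_def[symmetric] sum_principal_minors_mult_adjoint[OF A]
    by (metis of_real_eq_0_iff order_less_irrefl)
qed

section \<open>Least squares solutions\<close>

lemma sum_cnj_mult_eq_0_if_minimal:
  fixes u v :: "nat \<Rightarrow> complex"
  assumes fin: "finite N"
    and le: "\<And>c. (\<Sum>l\<in>N. (cmod (u l))\<^sup>2) \<le> (\<Sum>l\<in>N. (cmod (u l + c * v l))\<^sup>2)"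
  shows "(\<Sum>l\<in>N. cnj (u l) * v l) = 0"
proof (rule ccontr)
  define g where "g = (\<Sum>l\<in>N. cnj (u l) * v l)"
  define K where "K = (\<Sum>l\<in>N. (cmod (v l))\<^sup>2)"
  assume "(\<Sum>l\<in>N. cnj (u l) * v l) \<noteq> 0"
  then have g0: "g \<noteq> 0" unfolding g_def .
  have K0: "K \<ge> 0" unfolding K_def by (intro sum_nonneg) auto
  define t where "t = 1 / (K + 1)"
  have t0: "t > 0" and tK: "t * K < 1" unfolding t_def using K0 by (simp_all add: field_simps)
  have norm_add_sq: "(cmod (a + b))\<^sup>2 = (cmod a)\<^sup>2 + 2 * Re (cnj a * b) + (cmod b)\<^sup>2" for a b
    unfolding cmod_power2 by (simp add: power2_eq_square algebra_simps)
  \<comment> \<open>for small \<open>t > 0\<close> the perturbation \<open>c = -t \<cdot> cnj g\<close> strictly decreases the norm\<close>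
  define c where "c = - complex_of_real t * cnj g"
  have "(\<Sum>l\<in>N. (cmod (u l + c * v l))\<^sup>2)
      = (\<Sum>l\<in>N. (cmod (u l))\<^sup>2 + 2 * Re (c * (cnj (u l) * v l)) + (cmod c)\<^sup>2 * (cmod (v l))\<^sup>2)"
    by (intro sum.cong refl) (simp add: norm_add_sq norm_mult power_mult_distrib ac_simps)
  also have "\<dots> = (\<Sum>l\<in>N. (cmod (u l))\<^sup>2) + 2 * Re (c * g) + (cmod c)\<^sup>2 * K"
    unfolding g_def K_def by (simp add: sum.distrib sum_distrib_left Re_sum)
  finally have exp: "(\<Sum>l\<in>N. (cmod (u l + c * v l))\<^sup>2)
      = (\<Sum>l\<in>N. (cmod (u l))\<^sup>2) + 2 * Re (c * g) + (cmod c)\<^sup>2 * K" .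
  have "0 \<le> 2 * Re (c * g) + (cmod c)\<^sup>2 * K" using le[of c] unfolding exp by simp
  also have "\<dots> = t * (cmod g)\<^sup>2 * (t * K - 2)"
    unfolding c_def cmod_power2 using t0 by (simp add: norm_mult power2_eq_square algebra_simps)
  also have "\<dots> < 0" using t0 g0 tK by (simp add: mult_pos_neg)
  finally show False by simp
qed

lemma frob_norm_le_imp_row_le:
  assumes M: "M \<in> carrier_mat nr nc" and N: "N \<in> carrier_mat nr nc" and i: "i < nr"
    and same: "\<And>a p. a < nr \<Longrightarrow> a \<noteq> i \<Longrightarrow> p < nc \<Longrightarrow> N $$ (a, p) = M $$ (a, p)"
    and le: "frob_norm M \<le> frob_norm N"
  shows "(\<Sum>p<nc. (cmod (M $$ (i, p)))\<^sup>2) \<le> (\<Sum>p<nc. (cmod (N $$ (i, p)))\<^sup>2)"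
proof -
  define f where "f K a = (\<Sum>p<nc. (cmod (K $$ (a, p)))\<^sup>2)" for K a
  have "f M i + (\<Sum>a\<in>{..<nr} - {i}. f M a) \<le> f N i + (\<Sum>a\<in>{..<nr} - {i}. f N a)"
    using le M N i unfolding frob_norm_def f_def by (simp add: sum.remove[of _ i])
  moreover have "(\<Sum>a\<in>{..<nr} - {i}. f N a) = (\<Sum>a\<in>{..<nr} - {i}. f M a)"
    unfolding f_def by (intro sum.cong refl) (auto simp: same)
  ultimately show ?thesis unfolding f_def by simp
qed

lemma ls_solution_residual_orthogonal:
  assumes A: "A \<in> carrier_mat m n" and B: "B \<in> carrier_mat s n" and X: "is_ls_solution A B X"
  shows "(X * A - B) * mat_adjoint A = 0\<^sub>m s m"
proof -
  have Xc: "X \<in> carrier_mat s m"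
    and Xmin: "\<And>Y. Y \<in> carrier_mat s m \<Longrightarrow> frob_norm (X * A - B) \<le> frob_norm (Y * A - B)"
    using X A B unfolding is_ls_solution_def by auto
  define R where "R = X * A - B"
  have R: "R \<in> carrier_mat s n" unfolding R_def using Xc A B by auto
  have orth: "(\<Sum>p<n. cnj (R $$ (i, p)) * A $$ (k, p)) = 0" if i: "i < s" and k: "k < m" for i k
  proof (rule sum_cnj_mult_eq_0_if_minimal)
    fix c
    define Y where "Y = X + mat s m (\<lambda>(a, l). if a = i \<and> l = k then c else 0)"
    have Y: "Y \<in> carrier_mat s m" unfolding Y_def using Xc by auto
    have YR: "(Y * A - B) $$ (a, p) = R $$ (a, p) + (if a = i then c * A $$ (k, p) else 0)"
      if a: "a < s" and p: "p < n" for a p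
    proof -
      have "(Y * A) $$ (a, p) = (\<Sum>l<m. X $$ (a, l) * A $$ (l, p))
          + (\<Sum>l<m. (if a = i \<and> l = k then c else 0) * A $$ (l, p))"
        using a p Xc A by (simp add: Y_def scalar_prod_def lessThan_atLeast0 sum.distrib distrib_right)
      also have "(\<Sum>l<m. (if a = i \<and> l = k then c else 0) * A $$ (l, p))
          = (if a = i then c * A $$ (k, p) else 0)"
        using k by (auto simp: if_distrib[of "\<lambda>x. x * _"] cong: if_cong)
      finally show ?thesis
        using a p Xc A B by (simp add: R_def scalar_prod_def lessThan_atLeast0)
    qed
    have "(\<Sum>p<n. (cmod (R $$ (i, p)))\<^sup>2) \<le> (\<Sum>p<n. (cmod ((Y * A - B) $$ (i, p)))\<^sup>2)"
    proof (rule frob_norm_le_imp_row_le[OF R _ i])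
      show "Y * A - B \<in> carrier_mat s n" using Y A B by auto
      show "(Y * A - B) $$ (a, p) = R $$ (a, p)" if "a < s" "a \<noteq> i" "p < n" for a p
        using YR[OF that(1,3)] that(2) by simp
      show "frob_norm R \<le> frob_norm (Y * A - B)" unfolding R_def by (rule Xmin[OF Y])
    qed
    then show "(\<Sum>p<n. (cmod (R $$ (i, p)))\<^sup>2) \<le> (\<Sum>p<n. (cmod (R $$ (i, p) + c * A $$ (k, p)))\<^sup>2)"
      using i by (simp add: YR)
  qed simp
  have "(\<Sum>p<n. R $$ (i, p) * cnj (A $$ (k, p))) = 0" if "i < s" "k < m" for i k
    using arg_cong[where f = cnj, OF orth[OF that]] by (simp add: cnj_sum)
  then show ?thesis
    using R A by (intro eq_matI) (auto simp: R_def[symmetric] scalar_prod_def lessThan_atLeast0)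
qed

lemma ls_solution_normal_equation:
  assumes A: "A \<in> carrier_mat m n" and B: "B \<in> carrier_mat s n" and X: "is_ls_solution A B X"
  shows "X * (A * mat_adjoint A) = B * mat_adjoint A"
proof -
  have Xc: "X \<in> carrier_mat s m" using X A B unfolding is_ls_solution_def by auto
  have "X * (A * mat_adjoint A) - B * mat_adjoint A = (X * A - B) * mat_adjoint A"
    using minus_mult_distrib_mat[OF mult_carrier_mat[OF Xc A] B mat_adjoint_carrier[OF A]]
      assoc_mult_mat[OF Xc A mat_adjoint_carrier[OF A]] by simp
  also have "\<dots> = 0\<^sub>m s m" by (rule ls_solution_residual_orthogonal[OF A B X])
  finally have D: "X * (A * mat_adjoint A) - B * mat_adjoint A = 0\<^sub>m s m" .
  show ?thesis
  proof (rule eq_matI)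
    fix i j assume "i < dim_row (B * mat_adjoint A)" "j < dim_col (B * mat_adjoint A)"
    then have ij: "i < s" "j < m" using A B by auto
    have "(X * (A * mat_adjoint A) - B * mat_adjoint A) $$ (i, j) = 0" using D ij by simp
    then show "(X * (A * mat_adjoint A)) $$ (i, j) = (B * mat_adjoint A) $$ (i, j)" using ij Xc A B by simp
  qed (use Xc A B in auto)
qed

lemma min_norm_ls_solution_row_orthogonal:
  assumes A: "A \<in> carrier_mat m n" and B: "B \<in> carrier_mat s n" and X: "is_min_norm_ls_solution A B X"
    and i: "i < s" and z: "z \<in> carrier_vec m" and Az: "mat_adjoint A *\<^sub>v z = 0\<^sub>v n"
  shows "row X i \<bullet> z = 0"
proof -
  have XL: "is_ls_solution A B X" and Xmin: "\<And>Y. is_ls_solution A B Y \<Longrightarrow> frob_norm X \<le> frob_norm Y"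
    using X unfolding is_min_norm_ls_solution_def by auto
  have Xc: "X \<in> carrier_mat s m"
    and Xls: "\<And>Y. Y \<in> carrier_mat s m \<Longrightarrow> frob_norm (X * A - B) \<le> frob_norm (Y * A - B)"
    using XL A B unfolding is_ls_solution_def by auto
  have zA: "(\<Sum>l<m. cnj (z $ l) * A $$ (l, p)) = 0" if p: "p < n" for p
  proof -
    have "(\<Sum>l<m. cnj (z $ l) * A $$ (l, p)) = cnj ((mat_adjoint A *\<^sub>v z) $ p)"
      using A z p by (simp add: cnj_sum scalar_prod_def lessThan_atLeast0 mult.commute)
    then show ?thesis using Az p by simp
  qed
  have orth: "(\<Sum>l<m. cnj (X $$ (i, l)) * cnj (z $ l)) = 0"
  proof (rule sum_cnj_mult_eq_0_if_minimal)
    fix c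
    define Y where "Y = X + mat s m (\<lambda>(a, l). if a = i then c * cnj (z $ l) else 0)"
    have Y: "Y \<in> carrier_mat s m" unfolding Y_def using Xc by auto
    \<comment> \<open>the perturbation lies in the left kernel of \<open>A\<close>, so \<open>Y\<close> is again a least squares solution\<close>
    have "Y * A = X * A"
    proof (rule eq_matI)
      fix a p assume "a < dim_row (X * A)" and "p < dim_col (X * A)"
      then have a: "a < s" and p: "p < n" using Xc A by auto
      have "(Y * A) $$ (a, p)
          = (X * A) $$ (a, p) + (if a = i then c * (\<Sum>l<m. cnj (z $ l) * A $$ (l, p)) else 0)"
        using a p Xc A by (simp add: Y_def scalar_prod_def lessThan_atLeast0 sum.distrib
            algebra_simps sum_distrib_left)
      then show "(Y * A) $$ (a, p) = (X * A) $$ (a, p)" using zA[OF p] by simp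
    qed (use Y Xc A in auto)
    then have "frob_norm X \<le> frob_norm Y"
      using Y Xls A B by (intro Xmin) (simp add: is_ls_solution_def)
    then have "(\<Sum>l<m. (cmod (X $$ (i, l)))\<^sup>2) \<le> (\<Sum>l<m. (cmod (Y $$ (i, l)))\<^sup>2)"
      by (intro frob_norm_le_imp_row_le[OF Xc Y i]) (auto simp: Y_def)
    then show "(\<Sum>l<m. (cmod (X $$ (i, l)))\<^sup>2) \<le> (\<Sum>l<m. (cmod (X $$ (i, l) + c * cnj (z $ l)))\<^sup>2)"
      using i Xc by (simp add: Y_def)
  qed simp
  show ?thesis
    using arg_cong[where f = cnj, OF orth] Xc z i by (simp add: cnj_sum scalar_prod_def lessThan_atLeast0)
qed

section \<open>The adjugate of \<open>A A\<^sup>* + \<lambda> I\<close>\<close>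

lemma mat_adjoint_mult_vec_eq_0_of_mult_adjoint:
  fixes A :: "complex mat"
  assumes A: "A \<in> carrier_mat m n" and v: "v \<in> carrier_vec m"
    and Hv: "(A * mat_adjoint A) *\<^sub>v v = 0\<^sub>v m"
  shows "mat_adjoint A *\<^sub>v v = 0\<^sub>v n"
  using mult_mat_vec_eq_0_of_adjoint_mult[OF mat_adjoint_carrier[OF A] v] Hv by simp

lemma mult_adjoint_kernel_square:
  fixes A :: "complex mat"
  assumes A: "A \<in> carrier_mat m n" and u: "u \<in> carrier_vec m"
    and Hv: "(A * mat_adjoint A) *\<^sub>v ((A * mat_adjoint A) *\<^sub>v u) = 0\<^sub>v m"
  shows "(A * mat_adjoint A) *\<^sub>v u = 0\<^sub>v m"
proof -
  let ?v = "(A * mat_adjoint A) *\<^sub>v u"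
  have Au: "mat_adjoint A *\<^sub>v u \<in> carrier_vec n"
    using mat_adjoint_carrier[OF A] u by (rule mult_mat_vec_carrier)
  have v: "?v \<in> carrier_vec m"
    using mult_carrier_mat[OF A mat_adjoint_carrier[OF A]] u by (rule mult_mat_vec_carrier)
  have "?v = A *\<^sub>v (mat_adjoint A *\<^sub>v u)"
    using assoc_mult_mat_vec[OF A mat_adjoint_carrier[OF A] u] .
  then have "?v \<bullet>c ?v = (A *\<^sub>v (mat_adjoint A *\<^sub>v u)) \<bullet>c ?v"
    by (rule arg_cong[where f = "\<lambda>x. x \<bullet>c ?v"])
  also have "\<dots> = (mat_adjoint A *\<^sub>v u) \<bullet>c (mat_adjoint A *\<^sub>v ?v)"
    by (rule cscalar_prod_mult_mat_vec_adjoint[OF A Au v])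
  also have "\<dots> = 0" using mat_adjoint_mult_vec_eq_0_of_mult_adjoint[OF A v Hv] Au by simp
  finally show ?thesis using v by simp
qed

lemma shift_poly_matrix_adj_mat_row:
  fixes H :: "'a::comm_ring_1 mat"
  assumes H: "H \<in> carrier_mat m m" and k: "k < m" and j: "j < m"
  defines "M \<equiv> shift_poly_matrix H {}"
  shows "(\<Sum>l<m. [:H $$ (k, l):] * adj_mat M $$ (l, j)) + [:0,1:] * adj_mat M $$ (k, j)
    = (if k = j then det M else 0)"
proof -
  have M: "M \<in> carrier_mat m m" unfolding M_def using H by simp
  have adj: "adj_mat M \<in> carrier_mat m m" using adj_mat(1)[OF M] .
  have "(M * adj_mat M) $$ (k, j) = (\<Sum>l<m. M $$ (k, l) * adj_mat M $$ (l, j))"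
    using M adj k j by (simp add: scalar_prod_def lessThan_atLeast0)
  also have "\<dots> = (\<Sum>l<m. [:H $$ (k, l):] * adj_mat M $$ (l, j)
      + (if k = l then [:0,1:] * adj_mat M $$ (l, j) else 0))"
    using H k by (intro sum.cong refl) (simp add: M_def shift_poly_matrix_index algebra_simps)
  also have "\<dots> = (\<Sum>l<m. [:H $$ (k, l):] * adj_mat M $$ (l, j)) + [:0,1:] * adj_mat M $$ (k, j)"
    using k by (simp add: sum.distrib)
  finally show ?thesis using adj_mat(2)[OF M] k j by (cases "k = j") auto
qed

definition adj_coeff_col :: "'a::comm_ring_1 poly mat \<Rightarrow> nat \<Rightarrow> nat \<Rightarrow> 'a vec" where
  "adj_coeff_col M j t = vec (dim_row M) (\<lambda>l. coeff (adj_mat M $$ (l, j)) t)"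

lemma dim_adj_coeff_col [simp]: "dim_vec (adj_coeff_col M j t) = dim_row M"
  unfolding adj_coeff_col_def by simp

lemma adj_coeff_col_carrier [simp]: "M \<in> carrier_mat m m \<Longrightarrow> adj_coeff_col M j t \<in> carrier_vec m"
  unfolding adj_coeff_col_def by simp

lemma adj_coeff_col_recurrence:
  fixes H :: "'a::comm_ring_1 mat"
  assumes H: "H \<in> carrier_mat m m" and j: "j < m"
  defines "M \<equiv> shift_poly_matrix H {}"
  shows "H *\<^sub>v adj_coeff_col M j 0 = coeff (det M) 0 \<cdot>\<^sub>v unit_vec m j"
    and "H *\<^sub>v adj_coeff_col M j (Suc t) + adj_coeff_col M j t = coeff (det M) (Suc t) \<cdot>\<^sub>v unit_vec m j"
proof -
  have M: "M \<in> carrier_mat m m" unfolding M_def using H by simp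
  have Ha: "(H *\<^sub>v adj_coeff_col M j t) $ k = (\<Sum>l<m. H $$ (k, l) * coeff (adj_mat M $$ (l, j)) t)"
    if "k < m" for k t
    using H M that by (simp add: adj_coeff_col_def scalar_prod_def lessThan_atLeast0)
  have row: "(\<Sum>l<m. H $$ (k, l) * coeff (adj_mat M $$ (l, j)) t)
      + (case t of 0 \<Rightarrow> 0 | Suc t' \<Rightarrow> coeff (adj_mat M $$ (k, j)) t')
    = (coeff (det M) t \<cdot>\<^sub>v unit_vec m j) $ k" if k: "k < m" for k t
  proof -
    have "coeff ((\<Sum>l<m. [:H $$ (k, l):] * adj_mat M $$ (l, j)) + [:0,1:] * adj_mat M $$ (k, j)) t
      = coeff (if k = j then det M else 0) t"
      using shift_poly_matrix_adj_mat_row[OF H k j] unfolding M_def by simp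
    then show ?thesis using k j by (cases t) (auto simp: coeff_sum)
  qed
  show "H *\<^sub>v adj_coeff_col M j 0 = coeff (det M) 0 \<cdot>\<^sub>v unit_vec m j"
  proof (rule eq_vecI)
    fix k assume "k < dim_vec (coeff (det M) 0 \<cdot>\<^sub>v unit_vec m j)"
    then show "(H *\<^sub>v adj_coeff_col M j 0) $ k = (coeff (det M) 0 \<cdot>\<^sub>v unit_vec m j) $ k"
      using Ha row[of k 0] by simp
  qed (use H in simp)
  show "H *\<^sub>v adj_coeff_col M j (Suc t) + adj_coeff_col M j t = coeff (det M) (Suc t) \<cdot>\<^sub>v unit_vec m j"
  proof (rule eq_vecI)
    fix k assume "k < dim_vec (coeff (det M) (Suc t) \<cdot>\<^sub>v unit_vec m j)"
    then show "(H *\<^sub>v adj_coeff_col M j (Suc t) + adj_coeff_col M j t) $ k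
      = (coeff (det M) (Suc t) \<cdot>\<^sub>v unit_vec m j) $ k"
      using Ha row[of k "Suc t"] H M by (simp add: adj_coeff_col_def)
  qed (use H M in \<open>simp add: adj_coeff_col_def\<close>)
qed

lemma coeff_det_shift_mult_adjoint_below_rank:
  fixes A :: "complex mat"
  assumes A: "A \<in> carrier_mat m n" and t: "t < m - vec_space.rank m A"
  shows "coeff (det (shift_poly_matrix (A * mat_adjoint A) {})) t = 0"
proof -
  have "coeff (det (shift_poly_matrix (A * mat_adjoint A) {})) (m - (m - t))
    = (\<Sum>S\<in>index_sets (m - t) m. det (principal_submatrix (A * mat_adjoint A) S))"
    using coeff_det_shift_poly_matrix[OF mult_carrier_mat[OF A mat_adjoint_carrier[OF A]], of "{}" "m - t"]
    by simp
  also have "\<dots> = 0" using sum_principal_minors_mult_adjoint_above_rank[OF A] t by simp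
  finally show ?thesis using t by simp
qed

lemma adj_coeff_col_mult_adjoint_kernel:
  fixes A :: "complex mat"
  assumes A: "A \<in> carrier_mat m n" and j: "j < m" and t: "t < m - vec_space.rank m A"
  defines "H \<equiv> A * mat_adjoint A"
  shows "H *\<^sub>v adj_coeff_col (shift_poly_matrix H {}) j t = 0\<^sub>v m"
  using t
proof (induction t)
  have H: "H \<in> carrier_mat m m" unfolding H_def using A by simp
  note rec = adj_coeff_col_recurrence[OF H j]
  note P0 = coeff_det_shift_mult_adjoint_below_rank[OF A, folded H_def]
  {
    case 0
    then show ?case unfolding rec(1) P0[OF 0] by (intro eq_vecI) auto
  next
    case (Suc t)
    let ?a = "adj_coeff_col (shift_poly_matrix H {}) j"
    have a: "?a t \<in> carrier_vec m" "?a (Suc t) \<in> carrier_vec m" using H by simp_all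
    \<comment> \<open>\<open>a\<^sub>t = - H a\<^sub>t\<^sub>+\<^sub>1\<close> lies both in the range and, by induction, in the kernel of \<open>H\<close>\<close>
    have sum0: "H *\<^sub>v ?a (Suc t) + ?a t = 0\<^sub>v m"
      unfolding rec(2)[of t] P0[OF Suc.prems] by (intro eq_vecI) auto
    have "?a t = H *\<^sub>v (- ?a (Suc t))"
    proof (rule eq_vecI)
      fix k assume "k < dim_vec (H *\<^sub>v - ?a (Suc t))"
      then have k: "k < m" using H by simp
      have "(H *\<^sub>v ?a (Suc t)) $ k + ?a t $ k = 0"
        using arg_cong[where f = "\<lambda>v. v $ k", OF sum0] k H a by simp
      then show "?a t $ k = (H *\<^sub>v - ?a (Suc t)) $ k"
        using k H a by (simp add: eq_neg_iff_add_eq_0 add.commute)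
    qed (use H a in simp)
    then have zero: "H *\<^sub>v (- ?a (Suc t)) = 0\<^sub>v m"
      using Suc H a mult_adjoint_kernel_square[OF A, of "- ?a (Suc t)"] unfolding H_def by simp
    show ?case
    proof (rule eq_vecI)
      fix k assume k: "k < dim_vec (0\<^sub>v m :: complex vec)"
      then have "(H *\<^sub>v - ?a (Suc t)) $ k = 0" using zero by simp
      then show "(H *\<^sub>v ?a (Suc t)) $ k = 0\<^sub>v m $ k" using H a k by simp
    qed (use H in simp)
  }
qed

lemma det_shift_poly_matrix_replace_row:
  fixes H :: "'a::comm_ring_1 mat"
  assumes H: "H \<in> carrier_mat m m" and j: "j < m" and x: "x \<in> carrier_vec m"
  defines "M \<equiv> shift_poly_matrix H {}"
  shows "det (shift_poly_matrix (replace_row H j (vec m (\<lambda>l. x \<bullet> col H l))) {j})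
    = [:x $ j:] * det M - [:0,1:] * (\<Sum>k<m. [:x $ k:] * adj_mat M $$ (k, j))"
proof -
  define N where "N = shift_poly_matrix (replace_row H j (vec m (\<lambda>l. x \<bullet> col H l))) {j}"
  have M: "M \<in> carrier_mat m m" unfolding M_def using H by simp
  have R: "replace_row H j (vec m (\<lambda>l. x \<bullet> col H l)) \<in> carrier_mat m m"
    using H unfolding replace_row_def by simp
  have N: "N \<in> carrier_mat m m" unfolding N_def using R by simp
  have N_index: "N $$ (k, l) = (if k = j then [:x \<bullet> col H l:] else M $$ (k, l))" if "k < m" "l < m" for k l
    using that H unfolding N_def M_def shift_poly_matrix_index[OF R that] shift_poly_matrix_index[OF H that]
    by (simp add: replace_row_def)
  have cof: "cofactor N j l = adj_mat M $$ (l, j)" if l: "l < m" for l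
  proof -
    have "mat_delete N j l = mat_delete M j l"
      using N M j l by (intro eq_matI) (auto simp: mat_delete_def N_index)
    then show ?thesis unfolding adj_mat_def cofactor_def using M l j by simp
  qed
  have "det N = (\<Sum>l<m. N $$ (j, l) * cofactor N j l)" by (rule laplace_expansion_row[OF N j])
  also have "\<dots> = (\<Sum>l<m. \<Sum>k<m. [:x $ k:] * ([:H $$ (k, l):] * adj_mat M $$ (l, j)))"
  proof (intro sum.cong refl)
    fix l assume "l \<in> {..<m}"
    then have l: "l < m" by simp
    have "[:x \<bullet> col H l:] = (\<Sum>k<m. [:x $ k:] * [:H $$ (k, l):])"
      using x H l by (simp add: scalar_prod_def lessThan_atLeast0 const_poly_hom.hom_sum mult.commute)
    then show "N $$ (j, l) * cofactor N j l = (\<Sum>k<m. [:x $ k:] * ([:H $$ (k, l):] * adj_mat M $$ (l, j)))"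
      using l j by (simp add: N_index cof sum_distrib_right mult.assoc)
  qed
  also have "\<dots> = (\<Sum>k<m. \<Sum>l<m. [:x $ k:] * ([:H $$ (k, l):] * adj_mat M $$ (l, j)))"
    by (rule sum.swap)
  also have "\<dots> = (\<Sum>k<m. [:x $ k:] * ((if k = j then det M else 0) - [:0,1:] * adj_mat M $$ (k, j)))"
  proof (intro sum.cong refl)
    fix k assume "k \<in> {..<m}"
    then have "(\<Sum>l<m. [:H $$ (k, l):] * adj_mat M $$ (l, j))
      = (if k = j then det M else 0) - [:0,1:] * adj_mat M $$ (k, j)"
      using shift_poly_matrix_adj_mat_row[OF H _ j, folded M_def] by (simp only: eq_diff_eq lessThan_iff)
    then show "(\<Sum>l<m. [:x $ k:] * ([:H $$ (k, l):] * adj_mat M $$ (l, j)))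
      = [:x $ k:] * ((if k = j then det M else 0) - [:0,1:] * adj_mat M $$ (k, j))"
      unfolding sum_distrib_left[symmetric] by (rule arg_cong)
  qed
  also have "\<dots> = (\<Sum>k<m. if k = j then [:x $ k:] * det M else 0)
      - (\<Sum>k<m. [:0,1:] * ([:x $ k:] * adj_mat M $$ (k, j)))"
    unfolding right_diff_distrib sum_subtractf by (intro arg_cong2[where f = minus] sum.cong) auto
  also have "\<dots> = [:x $ j:] * det M - [:0,1:] * (\<Sum>k<m. [:x $ k:] * adj_mat M $$ (k, j))"
    using j by (simp only: sum.delta finite_lessThan lessThan_iff if_True sum_distrib_left)
  finally show ?thesis unfolding N_def .
qed

section \<open>Cramer's rule for the minimum norm least squares solution\<close>

lemma min_norm_ls_solution_coeff_det:
  fixes A B X :: "complex mat"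
  assumes A: "A \<in> carrier_mat m n" and B: "B \<in> carrier_mat s n" and X: "is_min_norm_ls_solution A B X"
    and i: "i < s" and j: "j < m" and e: "e \<le> m - vec_space.rank m A"
  defines "H \<equiv> A * mat_adjoint A"
  shows "coeff (det (shift_poly_matrix (replace_row H j (row (B * mat_adjoint A) i)) {j})) e
    = X $$ (i, j) * coeff (det (shift_poly_matrix H {})) e"
proof -
  define M where "M = shift_poly_matrix H {}"
  have H: "H \<in> carrier_mat m m" unfolding H_def using A by simp
  have XL: "is_ls_solution A B X" using X unfolding is_min_norm_ls_solution_def by simp
  have Xc: "X \<in> carrier_mat s m" using XL A B unfolding is_ls_solution_def by simp
  have x: "row X i \<in> carrier_vec m" using Xc i by simp
  have "row (B * mat_adjoint A) i = row (X * H) i"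
    using ls_solution_normal_equation[OF A B XL] unfolding H_def by simp
  also have "\<dots> = vec m (\<lambda>l. row X i \<bullet> col H l)" using Xc H i by simp
  finally have b: "row (B * mat_adjoint A) i = vec m (\<lambda>l. row X i \<bullet> col H l)" .
  have orth: "(\<Sum>k<m. X $$ (i, k) * coeff (adj_mat M $$ (k, j)) t) = 0"
    if t: "t < m - vec_space.rank m A" for t
  proof -
    let ?z = "adj_coeff_col M j t"
    have z: "?z \<in> carrier_vec m" using H unfolding M_def by simp
    have "H *\<^sub>v ?z = 0\<^sub>v m"
      using adj_coeff_col_mult_adjoint_kernel[OF A j t] unfolding H_def M_def .
    then have "mat_adjoint A *\<^sub>v ?z = 0\<^sub>v n"
      using mat_adjoint_mult_vec_eq_0_of_mult_adjoint[OF A z] unfolding H_def by simp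
    then have "row X i \<bullet> ?z = 0" by (rule min_norm_ls_solution_row_orthogonal[OF A B X i z])
    then show ?thesis using Xc i H by (simp add: M_def adj_coeff_col_def scalar_prod_def lessThan_atLeast0)
  qed
  have "coeff (det (shift_poly_matrix (replace_row H j (row (B * mat_adjoint A) i)) {j})) e
    = coeff ([:X $$ (i, j):] * det M - [:0,1:] * (\<Sum>k<m. [:X $$ (i, k):] * adj_mat M $$ (k, j))) e"
    unfolding b det_shift_poly_matrix_replace_row[OF H j x, folded M_def] using Xc i j by simp
  also have "\<dots> = X $$ (i, j) * coeff (det M) e"
  proof (cases e)
    case (Suc t)
    then have "t < m - vec_space.rank m A" using e by simp
    then show ?thesis using orth Suc by (simp add: coeff_sum)
  qed simp
  finally show ?thesis unfolding M_def .
qed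

theorem theorem4p2:
  fixes A B X :: "complex mat" and m n s r :: nat
  assumes A: "A \<in> carrier_mat m n"
    and B: "B \<in> carrier_mat s n"
    and X: "is_min_norm_ls_solution A B X"
  shows "(vec_space.rank m A = r \<and> r \<le> n \<and> n < m \<longrightarrow>
           (\<forall>i<s. \<forall>j<m. X $$ (i,j) =
              (\<Sum>\<alpha>\<in>{\<alpha>\<in>index_sets r m. j \<in> \<alpha>}.
                 det (principal_submatrix
                       (replace_row (A * mat_adjoint A) j (row (B * mat_adjoint A) i)) \<alpha>))
              / (\<Sum>\<alpha>\<in>index_sets r m. det (principal_submatrix (A * mat_adjoint A) \<alpha>))))
       \<and> (vec_space.rank m A = m \<longrightarrow>
           (\<forall>i<s. \<forall>j<m. X $$ (i,j) =
              det (replace_row (A * mat_adjoint A) j (row (B * mat_adjoint A) i))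
              / det (A * mat_adjoint A)))"
proof -
  define H where "H = A * mat_adjoint A"
  have H: "H \<in> carrier_mat m m" unfolding H_def using A by simp
  have N: "replace_row H j (row (B * mat_adjoint A) i) \<in> carrier_mat m m" for i j
    using H unfolding replace_row_def by simp
  note cramer = min_norm_ls_solution_coeff_det[OF A B X, folded H_def]
  note nonzero = sum_principal_minors_mult_adjoint_rank_neq_0[OF A, folded H_def]
  show ?thesis
    unfolding H_def[symmetric]
  proof (intro conjI impI allI)
    fix i j assume r: "vec_space.rank m A = r \<and> r \<le> n \<and> n < m" and i: "i < s" and j: "j < m"
    then show "X $$ (i, j) = (\<Sum>\<alpha>\<in>{\<alpha>\<in>index_sets r m. j \<in> \<alpha>}.
        det (principal_submatrix (replace_row H j (row (B * mat_adjoint A) i)) \<alpha>))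
      / (\<Sum>\<alpha>\<in>index_sets r m. det (principal_submatrix H \<alpha>))"
      using cramer[OF i j, of "m - r"] nonzero coeff_det_shift_poly_matrix[OF H, of "{}" r]
        coeff_det_shift_poly_matrix[OF N, of "{j}" r] by (simp add: eq_divide_eq)
  next
    fix i j assume r: "vec_space.rank m A = m" and i: "i < s" and j: "j < m"
    have "det H \<noteq> 0"
      using coeff_det_shift_poly_matrix[OF H, of "{}" m] coeff_0_det_shift_poly_matrix[OF H, of "{}"]
        nonzero r
      by simp
    then show "X $$ (i, j) = det (replace_row H j (row (B * mat_adjoint A) i)) / det H"
      using cramer[OF i j, of 0] coeff_0_det_shift_poly_matrix[OF H] coeff_0_det_shift_poly_matrix[OF N]
      by (simp add: eq_divide_eq)
  qed
qed

end
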